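(* Let $n\geq 2$, $k>0$, $m=\lfloor n/2\rfloor$, and $a\in\mathbb{C}^{2^m}$. Let $\phi'_{a,0}$ be the Killing spinor on $(\mathbb{H}^n_{-k^2},g')$ corresponding to $a$ (described in the context). Then at every point $X\in\mathbb{H}^n_{-k^2}\subset\mathbb{R}^{n,1}$, $$|\phi'_{a,0}|^2_{g'}=-2k\,X\cdot\zeta_a,$$ where $$\zeta_a=\sum_{j=1}^n\langle\sqrt{-1}\,c(e_j)a,a\rangle e_j-\langle\sqrt{-1}\,c(e_0)a,a\rangle e_0=\sum_{j=1}^n\langle\sqrt{-1}\,c(e_j)a,a\rangle e_j+|a|^2e_0 .$$
   Context: $\mathbb{R}^{n,1}$ is Minkowski space with orthonormal basis $e_1=\partial/\partial x_1,\dots,e_n=\partial/\partial x_n$, $e_0=\partial/\partial t$, metric $\sum dx_i^2-dt^2$ and Lorentz inner product "$\cdot$". $\mathbb{H}^n_{-k^2}=\{X=(x_1,\dots,x_n,t):\sum x_i^2-t^2=-1/k^2,\ t>0\}$ with induced metric $g'$. $\langle\cdot,\cdot\rangle$ is the standard Hermitian inner product on $\mathbb{C}^{2^m}$, $c(e_j)$ ($1\le j\le n$) are Baum's Clifford matrices (complex $2^m\times2^m$ matrices with $c(e_i)c(e_j)+c(e_j)c(e_i)=-2\delta_{ij}I$, built from $g_1=\begin{pmatrix}\sqrt{-1}&0\\0&-\sqrt{-1}\end{pmatrix}$, $g_2=\begin{pmatrix}0&\sqrt{-1}\\\sqrt{-1}&0\end{pmatrix}$, $T=\begin{pmatrix}0&-\sqrt{-1}\\\sqrt{-1}&0\end{pmatrix}$,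 $E=I_2$ by $c(e_{2j-1})=E\otimes\cdots\otimes E\otimes g_1\otimes T\otimes\cdots\otimes T$, $c(e_{2j})=E\otimes\cdots\otimes E\otimes g_2\otimes T\otimes\cdots\otimes T$ ($j-1$ factors $E$, $m$ factors total), and, if $n=2m+1$, $c(e_n)=\sqrt{-1}\,T\otimes\cdots\otimes T$), and $c(e_0):=\sqrt{-1}I$. A Killing spinor is a spinor field $\phi'$ with $\nabla'_V\phi'+\frac{\sqrt{-1}}{2}k\,c'(V)\phi'=0$ for all $V$, $\nabla'$ the spin connection and $c'$ Clifford multiplication of $g'$. By Baum, the Killing spinors are parametrized by $a\in\mathbb{C}^{2^m}$: in the ball model $x\in\{|x|<1/k\}\subset\mathbb{R}^n$ with metric $4|dx|^2/(1-k^2|x|^2)^2$, identified with the hyperboloid via $X=\big(\tfrac{2x}{1-k^2|x|^2},\tfrac{1+k^2|x|^2}{k(1-k^2|x|^2)}\big)$, and with the spinor bundle trivialized, $\phi'_{a,0}(x)=\sqrt{\tfrac{2}{1-k^2|x|^2}}\big(a-\sqrt{-1}\,k\,c(x)a\big)$, where $c(x)=\sum_j x_jc(e_j)$ (for $k=1$ this is Baum's formula $\sqrt{2/(1-|x|^2)}(a-\sqrt{-1}c(x)a)$). *)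

theory Defs
  imports Complex_Main
begin

text \<open>Complex square matrices of size N x N are represented as functions
  nat => nat => complex (only entries with indices < N matter);
  vectors in C^N as functions nat => complex (only indices < N matter).\<close>

type_synonym cmat = "nat \<Rightarrow> nat \<Rightarrow> complex"
type_synonym cvec = "nat \<Rightarrow> complex"

definition g1 :: cmat where
  "g1 i j = (if i = 0 \<and> j = 0 then \<i> else if i = 1 \<and> j = 1 then - \<i> else 0)"

definition g2 :: cmat where
  "g2 i j = (if (i = 0 \<and> j = 1) \<or> (i = 1 \<and> j = 0) then \<i> else 0)"

definition Tm :: cmat where
  "Tm i j = (if i = 0 \<and> j = 1 then - \<i> else if i = 1 \<and> j = 0 then \<i> else 0)"

definition Em :: cmat where
  "Em i j = (if i = j then 1 else 0)"

definition kron2 :: "cmat \<Rightarrow> nat \<Rightarrow> cmat \<Rightarrow> cmat" where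
  "kron2 A r B i j = A (i div 2^r) (j div 2^r) * B (i mod 2^r) (j mod 2^r)"

fun tens :: "cmat list \<Rightarrow> cmat" where
  "tens [] = (\<lambda>i j. if i = 0 \<and> j = 0 then 1 else 0)"
| "tens (A # As) = kron2 A (length As) (tens As)"

text \<open>Baum's Clifford matrices c(e_j), 1 <= j <= n, of size 2^m, m = n div 2.\<close>
definition cliff :: "nat \<Rightarrow> nat \<Rightarrow> cmat" where
  "cliff n j = (let m = n div 2 in
     if 1 \<le> j \<and> j \<le> 2 * m then
       (let l = (j + 1) div 2 in
        tens (replicate (l - 1) Em @ [if odd j then g1 else g2] @ replicate (m - l) Tm))
     else if odd n \<and> j = n then (\<lambda>a b. \<i> * tens (replicate m Tm) a b)
     else (\<lambda>_ _. 0))"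

definition cliff0 :: "nat \<Rightarrow> cmat" where
  "cliff0 n i j = (if i = j then \<i> else 0)"

definition mvec :: "nat \<Rightarrow> cmat \<Rightarrow> cvec \<Rightarrow> cvec" where
  "mvec N M v i = (\<Sum>l<N. M i l * v l)"

text \<open>Standard Hermitian inner product on C^N (linear in the first slot).\<close>
definition herm :: "nat \<Rightarrow> cvec \<Rightarrow> cvec \<Rightarrow> complex" where
  "herm N u v = (\<Sum>i<N. u i * cnj (v i))"

text \<open>Points x of R^n as functions nat => real, coordinates x_1..x_n.\<close>
definition sqnorm :: "nat \<Rightarrow> (nat \<Rightarrow> real) \<Rightarrow> real" where
  "sqnorm n x = (\<Sum>j=1..n. (x j)^2)"

definition cliffx :: "nat \<Rightarrow> (nat \<Rightarrow> real) \<Rightarrow> cmat" where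
  "cliffx n x i l = (\<Sum>j=1..n. complex_of_real (x j) * cliff n j i l)"

text \<open>Killing spinor phi'_{a,0} in the ball model with trivialized spinor bundle.\<close>
definition killing_spinor :: "nat \<Rightarrow> real \<Rightarrow> cvec \<Rightarrow> (nat \<Rightarrow> real) \<Rightarrow> cvec" where
  "killing_spinor n k a x i =
     complex_of_real (sqrt (2 / (1 - k^2 * sqnorm n x))) *
       (a i - \<i> * complex_of_real k * mvec (2 ^ (n div 2)) (cliffx n x) a i)"

text \<open>Pointwise squared length |phi|^2_{g'} (orthonormal trivialization).\<close>
definition spinor_sqnorm :: "nat \<Rightarrow> cvec \<Rightarrow> real" where
  "spinor_sqnorm n phi = (\<Sum>i<2 ^ (n div 2). (cmod (phi i))^2)"

text \<open>Hyperboloid point X = (X_1..X_n, t) corresponding to ball point x.\<close>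
definition hyp_space :: "nat \<Rightarrow> real \<Rightarrow> (nat \<Rightarrow> real) \<Rightarrow> nat \<Rightarrow> real" where
  "hyp_space n k x j = 2 * x j / (1 - k^2 * sqnorm n x)"

definition hyp_time :: "nat \<Rightarrow> real \<Rightarrow> (nat \<Rightarrow> real) \<Rightarrow> real" where
  "hyp_time n k x = (1 + k^2 * sqnorm n x) / (k * (1 - k^2 * sqnorm n x))"

definition zeta_sp :: "nat \<Rightarrow> cvec \<Rightarrow> nat \<Rightarrow> complex" where
  "zeta_sp n a j = herm (2 ^ (n div 2)) (mvec (2 ^ (n div 2)) (\<lambda>p q. \<i> * cliff n j p q) a) a"

definition zeta_t :: "nat \<Rightarrow> cvec \<Rightarrow> complex" where
  "zeta_t n a = - herm (2 ^ (n div 2)) (mvec (2 ^ (n div 2)) (\<lambda>p q. \<i> * cliff0 n p q) a) a"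

definition lorentz_zeta :: "nat \<Rightarrow> real \<Rightarrow> (nat \<Rightarrow> real) \<Rightarrow> cvec \<Rightarrow> complex" where
  "lorentz_zeta n k x a =
     (\<Sum>j=1..n. complex_of_real (hyp_space n k x j) * zeta_sp n a j)
     - complex_of_real (hyp_time n k x) * zeta_t n a"

end

theory Submission
  imports Defs
begin

text \<open>
  Baum's matrices c(e_1), ..., c(e_n) are skew-Hermitian and satisfy the Clifford relations
  c(e_i) c(e_j) + c(e_j) c(e_i) = -2 delta_ij. Hence c(x) is skew-Hermitian with c(x)^2 = -|x|^2,
  so that |c(x) a|^2 = |x|^2 |a|^2 and <c(x) a, a> is purely imaginary. Expanding the norm of
  phi = r (a - i k c(x) a), where r^2 = 2 / (1 - k^2 |x|^2), the cross terms combine to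
  |phi|^2 = r^2 ((1 + k^2 |x|^2) |a|^2 - 2 i k <c(x) a, a>), and this is -2k X.zeta_a once the
  hyperboloid point X is written in terms of the ball point x.

  The Clifford relations follow from the mixed-product rule for tensor products: c(e_j) is a
  scalar times a tensor product of factors E, g1, g2, T, where g1, g2, T pairwise anticommute and
  square to -E, -E, E; two distinct c(e_j) have anticommuting factors in exactly one position and
  commuting factors in all others.
\<close>

section \<open>Matrices and the Hermitian form\<close>

text \<open>Matrices are compared on their N x N block only; entries outside it are junk
  (Em, for instance, is the identity on all of nat).\<close>

definition mat_eq :: "nat \<Rightarrow> cmat \<Rightarrow> cmat \<Rightarrow> bool" where
  "mat_eq N A B \<longleftrightarrow> (\<forall>i<N. \<forall>j<N. A i j = B i j)"

definition mmul :: "nat \<Rightarrow> cmat \<Rightarrow> cmat \<Rightarrow> cmat" where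
  "mmul N A B i j = (\<Sum>l<N. A i l * B l j)"

definition adj :: "cmat \<Rightarrow> cmat" where
  "adj A i j = cnj (A j i)"

lemma mat_eq_trans [trans]: "mat_eq N A B \<Longrightarrow> mat_eq N B C \<Longrightarrow> mat_eq N A C"
  by (simp add: mat_eq_def)

lemma mmul_scaled:
  "mmul N (\<lambda>p q. c * A p q) (\<lambda>p q. d * B p q) i j = c * d * mmul N A B i j"
  by (simp add: mmul_def sum_distrib_left mult_ac)

lemma adj_scaled: "adj (\<lambda>p q. c * A p q) = (\<lambda>p q. cnj c * adj A p q)"
  by (simp add: fun_eq_iff adj_def)

lemma mvec_mvec: "mvec N A (mvec N B v) i = mvec N (mmul N A B) v i"
proof -
  have "mvec N A (mvec N B v) i = (\<Sum>l<N. \<Sum>l'<N. A i l * B l l' * v l')"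
    by (simp add: mvec_def sum_distrib_left mult.assoc)
  also have "\<dots> = (\<Sum>l'<N. \<Sum>l<N. A i l * B l l' * v l')"
    by (rule sum.swap)
  also have "\<dots> = mvec N (mmul N A B) v i"
    by (simp add: mvec_def mmul_def sum_distrib_right)
  finally show ?thesis .
qed

lemma mvec_mat_eq:
  assumes "mat_eq N A B" "i < N"
  shows "mvec N A v i = mvec N B v i"
  using assms by (simp add: mvec_def mat_eq_def)

lemma mvec_Em:
  assumes "i < N"
  shows "mvec N (\<lambda>p q. c * Em p q) v i = c * v i"
proof -
  have "mvec N (\<lambda>p q. c * Em p q) v i = (\<Sum>l<N. if l = i then c * v l else 0)"
    unfolding mvec_def Em_def by (intro sum.cong refl) auto
  then show ?thesis
    using assms by simp
qed

lemma herm_conj: "cnj (herm N u v) = herm N v u"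
  by (simp add: herm_def mult.commute)

lemma herm_mvec_left: "herm N (mvec N A u) v = herm N u (mvec N (adj A) v)"
proof -
  have "herm N (mvec N A u) v = (\<Sum>i<N. \<Sum>l<N. A i l * u l * cnj (v i))"
    by (simp add: herm_def mvec_def sum_distrib_right)
  also have "\<dots> = (\<Sum>l<N. \<Sum>i<N. A i l * u l * cnj (v i))"
    by (rule sum.swap)
  also have "\<dots> = herm N u (mvec N (adj A) v)"
    by (simp add: herm_def mvec_def adj_def sum_distrib_left mult_ac)
  finally show ?thesis .
qed

lemma herm_cong_right:
  assumes "\<And>i. i < N \<Longrightarrow> v i = v' i"
  shows "herm N u v = herm N u v'"
  using assms by (simp add: herm_def)

lemma herm_skew_square:
  assumes "adj M = - M" "mat_eq N (mmul N M M) (\<lambda>p q. - complex_of_real s * Em p q)"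
  shows "herm N (mvec N M a) (mvec N M a) = complex_of_real s * herm N a a"
proof -
  have "herm N (mvec N M a) (mvec N M a) = herm N a (mvec N (mmul N (adj M) M) a)"
    by (simp add: herm_mvec_left mvec_mvec[abs_def])
  also have "\<dots> = herm N a (\<lambda>i. complex_of_real s * a i)"
  proof (rule herm_cong_right)
    fix i assume "i < N"
    have "mat_eq N (mmul N (adj M) M) (\<lambda>p q. complex_of_real s * Em p q)"
      using assms by (simp add: mat_eq_def mmul_def sum_negf)
    then show "mvec N (mmul N (adj M) M) a i = complex_of_real s * a i"
      using \<open>i < N\<close> by (simp add: mvec_mat_eq mvec_Em)
  qed
  also have "\<dots> = complex_of_real s * herm N a a"
    by (simp add: herm_def sum_distrib_left mult_ac)
  finally show ?thesis .
qed

lemma herm_skew_imaginary: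
  assumes "adj M = - M"
  shows "cnj (herm N (mvec N M a) a) = - herm N (mvec N M a) a"
proof -
  have "cnj (herm N (mvec N M a) a) = herm N (mvec N (adj M) a) a"
    by (simp add: herm_conj herm_mvec_left)
  also have "\<dots> = - herm N (mvec N M a) a"
    by (simp add: assms herm_def mvec_def sum_negf)
  finally show ?thesis .
qed

lemma herm_scaled_diff:
  "herm N (\<lambda>i. complex_of_real r * (u i - w * v i)) (\<lambda>i. complex_of_real r * (u i - w * v i))
     = complex_of_real (r^2)
       * (herm N u u - cnj w * herm N u v - w * herm N v u + w * cnj w * herm N v v)"
  by (simp add: herm_def algebra_simps power2_eq_square sum.distrib sum_subtractf sum_distrib_left)

section \<open>Linear combinations of Clifford generators\<close>

definition mat_lincomb :: "(nat \<Rightarrow> real) \<Rightarrow> nat set \<Rightarrow> (nat \<Rightarrow> cmat) \<Rightarrow> cmat" where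
  "mat_lincomb x J C p q = (\<Sum>j\<in>J. complex_of_real (x j) * C j p q)"

lemma herm_lincomb_left:
  "(\<Sum>j\<in>J. complex_of_real (x j) * herm N (mvec N (C j) a) b)
     = herm N (mvec N (mat_lincomb x J C) a) b"
  by (simp add: herm_def mvec_def mat_lincomb_def sum_distrib_left sum_distrib_right mult_ac
      sum.swap[of _ J])

lemma adj_lincomb: "adj (mat_lincomb x J C) = mat_lincomb x J (\<lambda>j. adj (C j))"
  by (simp add: fun_eq_iff adj_def mat_lincomb_def)

lemma mmul_lincomb:
  "mmul N (mat_lincomb x J C) (mat_lincomb x J C) p q
     = (\<Sum>j\<in>J. \<Sum>j'\<in>J. complex_of_real (x j * x j') * mmul N (C j) (C j') p q)"
  by (simp add: mmul_def mat_lincomb_def sum_product sum_distrib_left mult_ac sum.swap[of _ "{..<N}"])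

lemma sum_symmetrize:
  fixes w M :: "'a \<Rightarrow> 'a \<Rightarrow> 'b :: semiring_1"
  assumes "\<And>i j. w i j = w j i"
  shows "2 * (\<Sum>i\<in>I. \<Sum>j\<in>I. w i j * M i j)
    = (\<Sum>i\<in>I. \<Sum>j\<in>I. w i j * (M i j + M j i))"
proof -
  have swap: "(\<Sum>i\<in>I. \<Sum>j\<in>I. w i j * M i j) = (\<Sum>i\<in>I. \<Sum>j\<in>I. w i j * M j i)"
    by (subst sum.swap) (intro sum.cong refl, metis assms)
  have "(\<Sum>i\<in>I. \<Sum>j\<in>I. w i j * (M i j + M j i))
      = (\<Sum>i\<in>I. \<Sum>j\<in>I. w i j * M i j) + (\<Sum>i\<in>I. \<Sum>j\<in>I. w i j * M j i)"
    by (simp only: distrib_left sum.distrib)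
  then show ?thesis
    unfolding swap by (simp only: mult_2)
qed

lemma clifford_lincomb_square:
  assumes "finite J"
    and "\<And>j. j \<in> J \<Longrightarrow> mat_eq N (mmul N (C j) (C j)) (- Em)"
    and "\<And>j j'. j \<in> J \<Longrightarrow> j' \<in> J \<Longrightarrow> j \<noteq> j' \<Longrightarrow>
           mat_eq N (mmul N (C j) (C j')) (- mmul N (C j') (C j))"
  shows "mat_eq N (mmul N (mat_lincomb x J C) (mat_lincomb x J C))
           (\<lambda>p q. - complex_of_real (\<Sum>j\<in>J. (x j)^2) * Em p q)"
  unfolding mat_eq_def
proof (intro allI impI)
  fix p q assume pq: "p < N" "q < N"
  let ?w = "\<lambda>j j'. complex_of_real (x j * x j')" and ?M = "\<lambda>j j'. mmul N (C j) (C j') p q"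
  have "2 * (\<Sum>j\<in>J. \<Sum>j'\<in>J. ?w j j' * ?M j j')
      = (\<Sum>j\<in>J. \<Sum>j'\<in>J. ?w j j' * (?M j j' + ?M j' j))"
    by (rule sum_symmetrize[of ?w ?M J]) (simp add: mult.commute)
  also have "\<dots> = (\<Sum>j\<in>J. \<Sum>j'\<in>J. if j' = j then ?w j j * (- 2 * Em p q) else 0)"
  proof (intro sum.cong refl)
    fix j j' assume j: "j \<in> J" and j': "j' \<in> J"
    show "?w j j' * (?M j j' + ?M j' j) = (if j' = j then ?w j j * (- 2 * Em p q) else 0)"
    proof (cases "j' = j")
      case True
      have "?M j j = - Em p q" using assms(2)[OF j] pq by (simp add: mat_eq_def)
      then show ?thesis using True by simp
    next
      case False
      have "?M j j' = - ?M j' j" using assms(3)[OF j j'] False pq by (simp add: mat_eq_def)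
      then show ?thesis using False by simp
    qed
  qed
  also have "\<dots> = 2 * (- complex_of_real (\<Sum>j\<in>J. (x j)^2) * Em p q)"
    using assms(1)
    by (simp add: sum.delta sum_distrib_right sum_distrib_left sum_negf power2_eq_square mult_ac)
  finally have "2 * (\<Sum>j\<in>J. \<Sum>j'\<in>J. ?w j j' * ?M j j')
      = 2 * (- complex_of_real (\<Sum>j\<in>J. (x j)^2) * Em p q)" .
  then show "mmul N (mat_lincomb x J C) (mat_lincomb x J C) p q
      = - complex_of_real (\<Sum>j\<in>J. (x j)^2) * Em p q"
    unfolding mmul_lincomb by (rule mult_left_cancel[THEN iffD1, rotated]) simp
qed

section \<open>The 2 x 2 factors\<close>

lemma mmul_two: "mmul 2 A B i j = A i 0 * B 0 j + A i 1 * B 1 j"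
  by (simp add: mmul_def numeral_2_eq_2)

lemma less_two_cases: "a < (2::nat) \<Longrightarrow> a = 0 \<or> a = 1"
  by auto

lemma mmul_Em_left: "mat_eq 2 (mmul 2 Em X) X"
  and mmul_Em_right: "mat_eq 2 (mmul 2 X Em) X"
  by (auto simp: mat_eq_def mmul_two Em_def dest!: less_two_cases)

lemma commute_if_Em_or_equal:
  assumes "A = Em \<or> B = Em \<or> A = B"
  shows "mat_eq 2 (mmul 2 A B) (mmul 2 B A)"
  using assms mmul_Em_left mmul_Em_right by (auto simp: mat_eq_def)

lemma pauli_anticommute:
  assumes "A \<in> {g1, g2, Tm}" "B \<in> {g1, g2, Tm}" "A \<noteq> B"
  shows "mat_eq 2 (mmul 2 A B) (- mmul 2 B A)"
  using assms by (auto simp: mat_eq_def mmul_two Tm_def g1_def g2_def dest!: less_two_cases)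

lemma pauli_square:
  "mat_eq 2 (mmul 2 Tm Tm) Em" "mat_eq 2 (mmul 2 g1 g1) (- Em)" "mat_eq 2 (mmul 2 g2 g2) (- Em)"
  by (auto simp: mat_eq_def mmul_two Tm_def g1_def g2_def Em_def dest!: less_two_cases)

lemma adj_pauli: "adj Em = Em" "adj Tm = Tm" "adj g1 = - g1" "adj g2 = - g2"
  by (auto simp: fun_eq_iff adj_def Em_def Tm_def g1_def g2_def)

lemma pauli_distinct: "g1 \<noteq> g2" "g1 \<noteq> Tm" "g2 \<noteq> Tm"
  by (auto simp: fun_eq_iff g1_def g2_def Tm_def)

section \<open>Tensor products\<close>

fun tensor :: "nat \<Rightarrow> (nat \<Rightarrow> cmat) \<Rightarrow> cmat" where
  "tensor 0 F = tens []"
| "tensor (Suc m) F = kron2 (F 0) m (tensor m (\<lambda>t. F (Suc t)))"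

lemma tens_map_upt: "tens (map F [0..<m]) = tensor m F"
proof (induction m arbitrary: F)
  case (Suc m)
  have "map F [0..<Suc m] = F 0 # map (\<lambda>t. F (Suc t)) [0..<m]"
    by (simp add: map_upt_Suc del: upt_Suc)
  then show ?case using Suc[of "\<lambda>t. F (Suc t)"] by simp
qed simp

lemma sum_lessThan_double:
  "(\<Sum>l<2 * R. f l) = (\<Sum>l<R. f l) + (\<Sum>l<R. f (R + l))" for R :: nat
  by (simp add: mult_2 sum.atLeastLessThan_concat[of 0 R "R + R", symmetric] lessThan_atLeast0
        sum.shift_bounds_nat_ivl[of f 0 R R, simplified] add.commute)

lemma tensor_mmul:
  "mat_eq (2^m) (mmul (2^m) (tensor m F) (tensor m G)) (tensor m (\<lambda>t. mmul 2 (F t) (G t)))"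
  unfolding mat_eq_def
proof (induction m arbitrary: F G)
  case (Suc m)
  show ?case
  proof (intro allI impI)
    fix i j :: nat assume "i < 2^Suc m" "j < 2^Suc m"
    define R :: nat where "R = 2^m"
    let ?F = "\<lambda>t. F (Suc t)" and ?G = "\<lambda>t. G (Suc t)"
    let ?P = "mmul R (tensor m ?F) (tensor m ?G) (i mod R) (j mod R)"
    have "2^Suc m = 2 * R" by (simp add: R_def)
    then have "mmul (2^Suc m) (tensor (Suc m) F) (tensor (Suc m) G) i j
       = (F 0 (i div R) 0 * G 0 0 (j div R) + F 0 (i div R) 1 * G 0 1 (j div R)) * ?P"
      by (simp only: mmul_def sum_lessThan_double)
        (simp add: kron2_def sum_distrib_left sum.distrib algebra_simps flip: R_def)
    also have "?P = tensor m (\<lambda>t. mmul 2 (?F t) (?G t)) (i mod R) (j mod R)"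
      using Suc.IH unfolding R_def by simp
    also have "(F 0 (i div R) 0 * G 0 0 (j div R) + F 0 (i div R) 1 * G 0 1 (j div R)) * \<dots>
        = tensor (Suc m) (\<lambda>t. mmul 2 (F t) (G t)) i j"
      by (simp add: kron2_def mmul_two R_def)
    finally show "mmul (2^Suc m) (tensor (Suc m) F) (tensor (Suc m) G) i j
        = tensor (Suc m) (\<lambda>t. mmul 2 (F t) (G t)) i j" .
  qed
qed (simp add: mat_eq_def mmul_def)

lemma tensor_cong:
  assumes "\<And>t. t < m \<Longrightarrow> mat_eq 2 (F t) (G t)"
  shows "mat_eq (2^m) (tensor m F) (tensor m G)"
  using assms unfolding mat_eq_def
proof (induction m arbitrary: F G)
  case (Suc m)
  show ?case
  proof (intro allI impI)
    fix i j :: nat assume "i < 2^Suc m" "j < 2^Suc m"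
    then have "i div 2^m < 2" "j div 2^m < 2"
      by (simp_all add: less_mult_imp_div_less mult.commute)
    moreover have "tensor m (\<lambda>t. F (Suc t)) (i mod 2^m) (j mod 2^m)
        = tensor m (\<lambda>t. G (Suc t)) (i mod 2^m) (j mod 2^m)"
      using Suc.IH[of "\<lambda>t. F (Suc t)" "\<lambda>t. G (Suc t)"] Suc.prems by simp
    ultimately show "tensor (Suc m) F i j = tensor (Suc m) G i j"
      using Suc.prems[of 0] by (simp add: kron2_def)
  qed
qed simp

lemma tensor_scale:
  assumes "s < m"
  shows "tensor m (F(s := (\<lambda>a b. c * F s a b))) i j = c * tensor m F i j"
  using assms
proof (induction m arbitrary: F s i j)
  case (Suc m)
  show ?case
  proof (cases s)
    case (Suc s')
    then have "(\<lambda>t. (F(s := (\<lambda>a b. c * F s a b))) (Suc t))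
        = (\<lambda>t. F (Suc t))(s' := (\<lambda>a b. c * F (Suc s') a b))"
      by auto
    then show ?thesis using Suc.IH[of s' "\<lambda>t. F (Suc t)"] Suc.prems \<open>s = Suc s'\<close>
      by (simp add: kron2_def)
  qed (simp add: kron2_def)
qed simp

lemma tensor_id: "mat_eq (2^m) (tensor m (\<lambda>_. Em)) Em"
  unfolding mat_eq_def
proof (induction m)
  case (Suc m)
  show ?case
  proof (intro allI impI)
    fix i j :: nat
    have "i = j \<longleftrightarrow> i div 2^m = j div 2^m \<and> i mod 2^m = j mod 2^m"
      by (metis div_mult_mod_eq)
    moreover have "tensor m (\<lambda>_. Em) (i mod 2^m) (j mod 2^m) = Em (i mod 2^m) (j mod 2^m)"
      using Suc.IH by simp
    ultimately show "tensor (Suc m) (\<lambda>_. Em) i j = Em i j"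
      by (simp add: kron2_def Em_def)
  qed
qed (simp add: Em_def)

lemma adj_tensor: "adj (tensor m F) = tensor m (\<lambda>t. adj (F t))"
  by (induction m arbitrary: F) (auto simp: adj_def kron2_def fun_eq_iff)

lemma tensor_anticommute:
  assumes "s < m"
    and "\<And>t. t < m \<Longrightarrow> t \<noteq> s \<Longrightarrow> mat_eq 2 (mmul 2 (F t) (G t)) (mmul 2 (G t) (F t))"
    and "mat_eq 2 (mmul 2 (F s) (G s)) (- mmul 2 (G s) (F s))"
  shows "mat_eq (2^m) (mmul (2^m) (tensor m F) (tensor m G))
           (- mmul (2^m) (tensor m G) (tensor m F))"
proof -
  let ?FG = "\<lambda>t. mmul 2 (F t) (G t)" and ?GF = "\<lambda>t. mmul 2 (G t) (F t)"
  have "mat_eq (2^m) (mmul (2^m) (tensor m F) (tensor m G)) (tensor m ?FG)"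
    by (rule tensor_mmul)
  also have "mat_eq (2^m) (tensor m ?FG) (tensor m (?GF(s := (\<lambda>a b. (-1) * ?GF s a b))))"
    by (rule tensor_cong) (use assms in \<open>auto simp: mat_eq_def\<close>)
  also have "mat_eq (2^m) \<dots> (- tensor m ?GF)"
    using tensor_scale[OF assms(1), of ?GF "-1"] by (simp add: mat_eq_def)
  also have "mat_eq (2^m) \<dots> (- mmul (2^m) (tensor m G) (tensor m F))"
    using tensor_mmul[of m G F] by (simp add: mat_eq_def)
  finally show ?thesis .
qed

section \<open>Baum's Clifford matrices\<close>

definition cliff_pos :: "nat \<Rightarrow> nat" where
  "cliff_pos j = (j + 1) div 2 - 1"

definition cliff_factor :: "nat \<Rightarrow> nat \<Rightarrow> nat \<Rightarrow> cmat" where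
  "cliff_factor n j t =
     (if j \<le> 2 * (n div 2) then
        (if t < cliff_pos j then Em else if t = cliff_pos j then (if odd j then g1 else g2) else Tm)
      else Tm)"

definition cliff_scalar :: "nat \<Rightarrow> nat \<Rightarrow> complex" where
  "cliff_scalar n j = (if j \<le> 2 * (n div 2) then 1 else \<i>)"

lemma cliff_eq_tensor:
  assumes "1 \<le> j" "j \<le> n"
  shows "cliff n j = (\<lambda>p q. cliff_scalar n j * tensor (n div 2) (cliff_factor n j) p q)"
proof (cases "j \<le> 2 * (n div 2)")
  case True
  have pos: "1 \<le> (j + 1) div 2" "(j + 1) div 2 \<le> n div 2" using True assms by auto
  have "replicate ((j + 1) div 2 - 1) Em @ [if odd j then g1 else g2]
          @ replicate (n div 2 - (j + 1) div 2) Tm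
        = map (cliff_factor n j) [0..<n div 2]"
    by (rule nth_equalityI)
      (use pos True in \<open>auto simp: nth_append cliff_factor_def cliff_pos_def\<close>)
  then show ?thesis using True assms
    by (simp add: cliff_def cliff_scalar_def tens_map_upt)
next
  case False
  then have "odd n" "j = n" "cliff_factor n j = (\<lambda>_. Tm)"
    using assms by (auto simp: cliff_factor_def)
  moreover have "replicate (n div 2) Tm = map (\<lambda>_. Tm) [0..<n div 2]"
    by (simp add: map_replicate_const)
  ultimately show ?thesis using False
    by (simp add: cliff_def cliff_scalar_def tens_map_upt)
qed

lemma cliff_factors_commute:
  assumes "1 \<le> j" "j < j'" "j' \<le> n"
    and "t \<noteq> (if j' \<le> 2 * (n div 2) then cliff_pos j' else cliff_pos j)"
  shows "mat_eq 2 (mmul 2 (cliff_factor n j t) (cliff_factor n j' t))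
           (mmul 2 (cliff_factor n j' t) (cliff_factor n j t))"
proof (rule commute_if_Em_or_equal)
  have "cliff_pos j \<le> cliff_pos j'" "j \<le> 2 * (n div 2)"
    using assms(1-3) by (auto simp: cliff_pos_def intro!: diff_le_mono div_le_mono)
  then show "cliff_factor n j t = Em \<or> cliff_factor n j' t = Em
      \<or> cliff_factor n j t = cliff_factor n j' t"
    using assms(4) by (auto simp: cliff_factor_def)
qed

lemma cliff_factors_anticommute:
  assumes "1 \<le> j" "j < j'" "j' \<le> n"
    and "s = (if j' \<le> 2 * (n div 2) then cliff_pos j' else cliff_pos j)"
  shows "mat_eq 2 (mmul 2 (cliff_factor n j s) (cliff_factor n j' s))
           (- mmul 2 (cliff_factor n j' s) (cliff_factor n j s))"
proof (rule pauli_anticommute)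
  \<comment> \<open>s is the last position where the factors of e_j and e_j' differ\<close>
  have "cliff_pos j \<le> cliff_pos j'" "j \<le> 2 * (n div 2)"
    using assms(1-3) by (auto simp: cliff_pos_def intro!: diff_le_mono div_le_mono)
  moreover have "cliff_pos j = cliff_pos j' \<Longrightarrow> odd j \<and> even j'"
    using assms(1,2) unfolding cliff_pos_def by presburger
  ultimately show "cliff_factor n j s \<in> {g1, g2, Tm}" "cliff_factor n j' s \<in> {g1, g2, Tm}"
    "cliff_factor n j s \<noteq> cliff_factor n j' s"
    using assms(4) pauli_distinct by (auto simp: cliff_factor_def)
qed

lemma cliff_anticommute_less:
  assumes "1 \<le> j" "j < j'" "j' \<le> n"
  shows "mat_eq (2^(n div 2)) (mmul (2^(n div 2)) (cliff n j) (cliff n j'))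
           (- mmul (2^(n div 2)) (cliff n j') (cliff n j))"
proof -
  define s where "s = (if j' \<le> 2 * (n div 2) then cliff_pos j' else cliff_pos j)"
  have "s < n div 2"
    using assms by (auto simp: s_def cliff_pos_def)
  let ?T = "tensor (n div 2) (cliff_factor n j)" and ?T' = "tensor (n div 2) (cliff_factor n j')"
  have "mat_eq (2^(n div 2)) (mmul (2^(n div 2)) ?T ?T') (- mmul (2^(n div 2)) ?T' ?T)"
    using \<open>s < n div 2\<close> cliff_factors_commute[OF assms] cliff_factors_anticommute[OF assms s_def]
    by (intro tensor_anticommute) (auto simp: s_def)
  then show ?thesis
    using assms by (simp add: cliff_eq_tensor mmul_scaled mat_eq_def mult.commute)
qed

lemma cliff_anticommute:
  assumes "1 \<le> j" "j \<le> n" "1 \<le> j'" "j' \<le> n" "j \<noteq> j'"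
  shows "mat_eq (2^(n div 2)) (mmul (2^(n div 2)) (cliff n j) (cliff n j'))
           (- mmul (2^(n div 2)) (cliff n j') (cliff n j))"
proof (cases "j < j'")
  case False
  then have "j' < j" using assms(5) by simp
  then show ?thesis
    using cliff_anticommute_less[of j' j n] assms by (auto simp: mat_eq_def)
qed (use cliff_anticommute_less assms in auto)

lemma cliff_square:
  assumes "1 \<le> j" "j \<le> n"
  shows "mat_eq (2^(n div 2)) (mmul (2^(n div 2)) (cliff n j) (cliff n j)) (- Em)"
proof -
  let ?m = "n div 2" and ?F = "cliff_factor n j"
  have prod: "mat_eq (2^?m) (mmul (2^?m) (tensor ?m ?F) (tensor ?m ?F))
      (tensor ?m (\<lambda>t. mmul 2 (?F t) (?F t)))"
    by (rule tensor_mmul)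
  show ?thesis
  proof (cases "j \<le> 2 * ?m")
    case True
    define s where "s = cliff_pos j"
    have "s < ?m" using True assms by (auto simp: s_def cliff_pos_def)
    note prod
    also have "mat_eq (2^?m) (tensor ?m (\<lambda>t. mmul 2 (?F t) (?F t)))
        (tensor ?m ((\<lambda>_. Em)(s := (\<lambda>a b. (-1) * Em a b))))"
      by (rule tensor_cong)
        (use True pauli_square mmul_Em_left in \<open>auto simp: cliff_factor_def s_def mat_eq_def\<close>)
    also have "mat_eq (2^?m) \<dots> (- Em)"
      using tensor_scale[OF \<open>s < ?m\<close>, of "\<lambda>_. Em" "-1"] tensor_id
      by (simp add: mat_eq_def)
    finally show ?thesis
      using assms True by (simp add: cliff_eq_tensor mmul_scaled cliff_scalar_def mat_eq_def)
  next
    case False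
    note prod
    also have "mat_eq (2^?m) (tensor ?m (\<lambda>t. mmul 2 (?F t) (?F t))) (tensor ?m (\<lambda>_. Em))"
      by (rule tensor_cong) (use False pauli_square in \<open>simp add: cliff_factor_def\<close>)
    also have "mat_eq (2^?m) \<dots> Em"
      by (rule tensor_id)
    finally show ?thesis
      using assms False by (simp add: cliff_eq_tensor mmul_scaled cliff_scalar_def mat_eq_def)
  qed
qed

lemma adj_cliff:
  assumes "1 \<le> j" "j \<le> n"
  shows "adj (cliff n j) = - cliff n j"
proof (cases "j \<le> 2 * (n div 2)")
  case True
  have pos: "cliff_pos j < n div 2" using True assms by (auto simp: cliff_pos_def)
  have adj_factors: "(\<lambda>t. adj (cliff_factor n j t))
      = (cliff_factor n j)(cliff_pos j := (\<lambda>a b. (-1) * cliff_factor n j (cliff_pos j) a b))"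
    using True by (auto simp: fun_eq_iff cliff_factor_def adj_pauli)
  have "adj (tensor (n div 2) (cliff_factor n j)) = - tensor (n div 2) (cliff_factor n j)"
    unfolding adj_tensor adj_factors
    using tensor_scale[OF pos, of "cliff_factor n j" "-1"] by (simp add: fun_eq_iff)
  then show ?thesis
    using assms True
    by (simp add: cliff_eq_tensor cliff_scalar_def adj_scaled fun_eq_iff)
next
  case False
  then have "(\<lambda>t. adj (cliff_factor n j t)) = cliff_factor n j"
    by (simp add: fun_eq_iff cliff_factor_def adj_pauli)
  then have "adj (tensor (n div 2) (cliff_factor n j)) = tensor (n div 2) (cliff_factor n j)"
    by (simp add: adj_tensor)
  then show ?thesis
    using assms False
    by (simp add: cliff_eq_tensor cliff_scalar_def adj_scaled fun_eq_iff)
qed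

lemma cliffx_eq_lincomb: "cliffx n x = mat_lincomb x {1..n} (cliff n)"
  by (simp add: fun_eq_iff cliffx_def mat_lincomb_def)

lemma adj_cliffx: "adj (cliffx n x) = - cliffx n x"
  by (simp add: cliffx_eq_lincomb adj_lincomb adj_cliff fun_eq_iff mat_lincomb_def sum_negf)

lemma cliffx_square:
  "mat_eq (2^(n div 2)) (mmul (2^(n div 2)) (cliffx n x) (cliffx n x))
     (\<lambda>p q. - complex_of_real (sqnorm n x) * Em p q)"
  unfolding cliffx_eq_lincomb sqnorm_def
  by (rule clifford_lincomb_square) (auto intro: cliff_square cliff_anticommute)

section \<open>The Killing spinor\<close>

lemma of_real_spinor_sqnorm:
  "complex_of_real (spinor_sqnorm n \<phi>) = herm (2^(n div 2)) \<phi> \<phi>"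
  unfolding spinor_sqnorm_def herm_def of_real_sum
  by (intro sum.cong refl) (rule complex_norm_square)

lemma zeta_t_eq_herm: "zeta_t n a = herm (2^(n div 2)) a a"
proof -
  have "(\<lambda>p q. \<i> * cliff0 n p q) = (\<lambda>p q. -1 * Em p q)"
    by (simp add: fun_eq_iff cliff0_def Em_def)
  then have "mvec (2^(n div 2)) (\<lambda>p q. \<i> * cliff0 n p q) a p = - a p" if "p < 2^(n div 2)" for p
    using mvec_Em[OF that, of "-1" a] by simp
  then show ?thesis by (simp add: zeta_t_def herm_def sum_negf)
qed

lemma zeta_sp_eq_herm:
  "zeta_sp n a j = \<i> * herm (2^(n div 2)) (mvec (2^(n div 2)) (cliff n j) a) a"
  by (simp add: zeta_sp_def herm_def mvec_def sum_distrib_left sum_distrib_right mult_ac)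

lemma lorentz_zeta_eq:
  fixes n :: nat and k :: real and x :: "nat \<Rightarrow> real" and a :: cvec
  defines "N \<equiv> 2^(n div 2)" and "D \<equiv> 1 - k^2 * sqnorm n x"
  shows "lorentz_zeta n k x a
    = complex_of_real (2 / D) * \<i> * herm N (mvec N (cliffx n x) a) a
      - complex_of_real ((1 + k^2 * sqnorm n x) / (k * D)) * herm N a a"
proof -
  have "(\<Sum>j=1..n. complex_of_real (hyp_space n k x j) * zeta_sp n a j)
      = complex_of_real (2 / D) * \<i>
        * (\<Sum>j=1..n. complex_of_real (x j) * herm N (mvec N (cliff n j) a) a)"
    by (simp add: hyp_space_def zeta_sp_eq_herm sum_distrib_left mult_ac N_def D_def)
  also have "(\<Sum>j=1..n. complex_of_real (x j) * herm N (mvec N (cliff n j) a) a)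
      = herm N (mvec N (cliffx n x) a) a"
    by (simp add: herm_lincomb_left cliffx_eq_lincomb)
  finally show ?thesis
    by (simp add: lorentz_zeta_def hyp_time_def zeta_t_eq_herm N_def D_def)
qed

lemma spinor_sqnorm_killing_spinor:
  fixes n :: nat and k :: real and x :: "nat \<Rightarrow> real" and a :: cvec
  defines "N \<equiv> 2^(n div 2)" and "D \<equiv> 1 - k^2 * sqnorm n x"
  assumes "D > 0"
  shows "complex_of_real (spinor_sqnorm n (killing_spinor n k a x))
    = complex_of_real (2 / D)
      * ((1 + k^2 * sqnorm n x) * herm N a a - 2 * \<i> * k * herm N (mvec N (cliffx n x) a) a)"
proof -
  define b where "b = mvec N (cliffx n x) a"
  have norm_b: "herm N b b = complex_of_real (sqnorm n x) * herm N a a"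
    unfolding b_def N_def by (rule herm_skew_square[OF adj_cliffx cliffx_square])
  have herm_a_b: "herm N a b = - herm N b a"
    using herm_skew_imaginary[OF adj_cliffx, of N n x a] by (simp add: b_def herm_conj)
  have "killing_spinor n k a x
      = (\<lambda>i. complex_of_real (sqrt (2 / D)) * (a i - (\<i> * complex_of_real k) * b i))"
    by (simp add: fun_eq_iff killing_spinor_def D_def b_def N_def mult.assoc)
  then have "complex_of_real (spinor_sqnorm n (killing_spinor n k a x))
      = complex_of_real ((sqrt (2 / D))^2)
        * (herm N a a - cnj (\<i> * complex_of_real k) * herm N a b
          - \<i> * complex_of_real k * herm N b a
          + \<i> * complex_of_real k * cnj (\<i> * complex_of_real k) * herm N b b)"
    by (simp only: of_real_spinor_sqnorm herm_scaled_diff N_def)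
  also have "\<dots> = complex_of_real (2 / D)
      * ((1 + k^2 * sqnorm n x) * herm N a a - 2 * \<i> * k * herm N b a)"
    using assms(3) by (simp add: norm_b herm_a_b algebra_simps power2_eq_square)
  finally show ?thesis unfolding b_def .
qed

theorem proposition2p3:
  fixes n :: nat and k :: real and a :: "nat \<Rightarrow> complex" and x :: "nat \<Rightarrow> real"
  assumes "n \<ge> 2" and "k > 0"
    and "k^2 * sqnorm n x < 1"
  shows "complex_of_real (spinor_sqnorm n (killing_spinor n k a x))
           = - 2 * complex_of_real k * lorentz_zeta n k x a"
proof -
  define D where "D = 1 - k^2 * sqnorm n x"
  have "D > 0" using assms(3) by (simp add: D_def)
  show ?thesis
    unfolding
      spinor_sqnorm_killing_spinor[where n = n and k = k and x = x and a = a, folded D_def,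
        OF \<open>D > 0\<close>]
      lorentz_zeta_eq[where n = n and k = k and x = x and a = a, folded D_def]
    using \<open>D > 0\<close> assms(2) by (simp add: field_simps)
qed

end
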